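(* Let $G$ be a group with finite generating set $S$ (with $S=S^{-1}$, $e\notin S$), and let $N\le G$ be a normal subgroup which is infinite cyclic. Then $\kappa(g)=0$ for all $g\in N\smallsetminus\{e\}$.
   Context: For a group $G$ with finite generating set $S$ ($S=S^{-1}$, $e\notin S$), $|x|$ denotes the word length of $x\in G$ with respect to $S$. For $g\in G$ define $\mathrm{Av}(g)=\frac{1}{|S|}\sum_{a\in S}|a^{-1}ga|$, and for $g\neq e$ define the curvature $\kappa(g)=\frac{|g|-\mathrm{Av}(g)}{|g|}$. *)

theory Defs
  imports Complex_Main "HOL-Algebra.Algebra"
begin

definition word_prod :: "('a, 'b) monoid_scheme \<Rightarrow> 'a list \<Rightarrow> 'a" where
  "word_prod G ws = foldr (\<lambda>a b. a \<otimes>\<^bsub>G\<^esub> b) ws \<one>\<^bsub>G\<^esub>"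

definition word_length :: "('a, 'b) monoid_scheme \<Rightarrow> 'a set \<Rightarrow> 'a \<Rightarrow> nat" where
  "word_length G S x = (LEAST n. \<exists>ws. length ws = n \<and> set ws \<subseteq> S \<and> word_prod G ws = x)"

definition fin_sym_gen_set :: "('a, 'b) monoid_scheme \<Rightarrow> 'a set \<Rightarrow> bool" where
  "fin_sym_gen_set G S \<longleftrightarrow> finite S \<and> S \<subseteq> carrier G \<and> generate G S = carrier G
     \<and> (\<forall>a\<in>S. inv\<^bsub>G\<^esub> a \<in> S) \<and> \<one>\<^bsub>G\<^esub> \<notin> S"

definition Av :: "('a, 'b) monoid_scheme \<Rightarrow> 'a set \<Rightarrow> 'a \<Rightarrow> real" where
  "Av G S g = (1 / real (card S)) * (\<Sum>a\<in>S. real (word_length G S (inv\<^bsub>G\<^esub> a \<otimes>\<^bsub>G\<^esub> g \<otimes>\<^bsub>G\<^esub> a)))"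

definition curvature :: "('a, 'b) monoid_scheme \<Rightarrow> 'a set \<Rightarrow> 'a \<Rightarrow> real" where
  "curvature G S g = (real (word_length G S g) - Av G S g) / real (word_length G S g)"

end

theory Submission
  imports Defs
begin

text \<open>Conjugation by a generator a \<in> S maps the infinite cyclic normal subgroup N = \<langle>h\<rangle>
  onto itself, so it is an automorphism of N \<cong> \<int> and sends h to h or h\<inverse>. Hence every
  g \<in> N is conjugated by a to g or g\<inverse>, both of which have the same word length as g
  since S is symmetric. Every summand of Av g then equals |g|, so Av g = |g| and the
  curvature vanishes.\<close>

lemma (in group) inner_conj_hom:
  assumes a: "a \<in> carrier G"
  shows "(\<lambda>x. inv a \<otimes> x \<otimes> a) \<in> hom G G"
proof (rule homI)
  fix x y assume x: "x \<in> carrier G" and y: "y \<in> carrier G"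
  have cancel: "a \<otimes> (inv a \<otimes> z) = z" if "z \<in> carrier G" for z
    using a that by (simp flip: m_assoc)
  show "inv a \<otimes> (x \<otimes> y) \<otimes> a = inv a \<otimes> x \<otimes> a \<otimes> (inv a \<otimes> y \<otimes> a)"
    using a x y cancel by (simp add: m_assoc)
qed (use a in auto)

lemma (in group) inner_conj_int_pow:
  assumes "a \<in> carrier G" "x \<in> carrier G"
  shows "inv a \<otimes> x [^] (k::int) \<otimes> a = (inv a \<otimes> x \<otimes> a) [^] k"
  using hom_int_pow[OF inner_conj_hom[OF assms(1)] assms(2) is_group is_group] by simp

lemma (in group) inner_conj_generator_of_infinite_cyclic_normal:
  assumes h: "h \<in> carrier G" and normal: "generate G {h} \<lhd> G"
    and infinite: "infinite (generate G {h})" and a: "a \<in> carrier G"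
  shows "inv a \<otimes> h \<otimes> a = h \<or> inv a \<otimes> h \<otimes> a = inv h"
proof -
  have powers: "generate G {h} = {h [^] (k::int) | k. k \<in> UNIV}"
    using generate_pow[OF h] .
  have pow_inj: "\<forall>i j::int. h [^] i = h [^] j \<longrightarrow> i = j"
    using infinite infinite_cyclic_subgroup_int[OF h] h
    by (simp add: carrier_subgroup_generated Int_absorb1)
  have h_mem: "h \<in> generate G {h}"
    using h by (simp add: generate.incl)
  have closed: "x \<otimes> h \<otimes> inv x \<in> generate G {h}" if "x \<in> carrier G" for x
    using normal that h_mem by (simp add: normal_inv_iff)
  have "inv a \<otimes> h \<otimes> a \<in> generate G {h}" "a \<otimes> h \<otimes> inv a \<in> generate G {h}"
    using closed[of "inv a"] closed[of a] a by simp_all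
  then obtain k m :: int where k: "inv a \<otimes> h \<otimes> a = h [^] k" and m: "a \<otimes> h \<otimes> inv a = h [^] m"
    using powers a by auto
  have "h = inv a \<otimes> (a \<otimes> h \<otimes> inv a) \<otimes> a"
    using a h by (simp add: m_assoc flip: m_assoc[of "inv a" a])
  also have "\<dots> = (h [^] k) [^] m"
    using m k inner_conj_int_pow[OF a h] by simp
  also have "\<dots> = h [^] (k * m)"
    using int_pow_pow[OF h] by simp
  finally have "h [^] (1::int) = h [^] (k * m)"
    using h by simp
  then have "k * m = 1"
    using pow_inj by metis
  then have "k = 1 \<or> k = -1"
    by (auto simp: zmult_eq_1_iff)
  then show ?thesis
    using k h by (auto simp: int_pow_neg)
qed

lemma (in group) inner_conj_of_infinite_cyclic_normal:
  assumes h: "h \<in> carrier G" and normal: "generate G {h} \<lhd> G"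
    and infinite: "infinite (generate G {h})" and a: "a \<in> carrier G"
    and g: "g \<in> generate G {h}"
  shows "inv a \<otimes> g \<otimes> a = g \<or> inv a \<otimes> g \<otimes> a = inv g"
proof -
  obtain n :: int where n: "g = h [^] n"
    using g generate_pow[OF h] by auto
  have "inv a \<otimes> g \<otimes> a = (inv a \<otimes> h \<otimes> a) [^] n"
    using inner_conj_int_pow[OF a h] n by simp
  with inner_conj_generator_of_infinite_cyclic_normal[OF assms(1-4)] show ?thesis
    using n h by (auto simp: int_pow_inv)
qed

lemma (in monoid) word_prod_closed:
  "set ws \<subseteq> carrier G \<Longrightarrow> word_prod G ws \<in> carrier G"
  by (induction ws) (auto simp: word_prod_def)

lemma (in monoid) word_prod_append:
  assumes "set xs \<subseteq> carrier G" "set ys \<subseteq> carrier G"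
  shows "word_prod G (xs @ ys) = word_prod G xs \<otimes> word_prod G ys"
  using assms
proof (induction xs)
  case Nil
  then show ?case
    using word_prod_closed by (simp add: word_prod_def)
next
  case (Cons x xs)
  then show ?case
    using word_prod_closed by (simp add: word_prod_def m_assoc)
qed

lemma (in group) word_prod_rev_map_inv:
  "set ws \<subseteq> carrier G \<Longrightarrow> word_prod G (rev (map (m_inv G) ws)) = inv (word_prod G ws)"
proof (induction ws)
  case Nil
  then show ?case
    by (simp add: word_prod_def)
next
  case (Cons x xs)
  have "word_prod G (rev (map (m_inv G) (x # xs)))
      = word_prod G (rev (map (m_inv G) xs)) \<otimes> word_prod G [inv x]"
    using Cons.prems word_prod_append[of "rev (map (m_inv G) xs)" "[inv x]"] by auto
  also have "\<dots> = inv (word_prod G xs) \<otimes> inv x"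
    using Cons by (simp add: word_prod_def)
  finally have "word_prod G (rev (map (m_inv G) (x # xs))) = inv (word_prod G xs) \<otimes> inv x" .
  then show ?case
    using Cons.prems word_prod_closed by (simp add: inv_mult_group word_prod_def)
qed

lemma (in group) word_length_inv:
  assumes S: "S \<subseteq> carrier G" and S_inv: "\<forall>a\<in>S. inv a \<in> S" and g: "g \<in> carrier G"
  shows "word_length G S (inv g) = word_length G S g"
proof -
  have invert: "\<exists>ws. length ws = n \<and> set ws \<subseteq> S \<and> word_prod G ws = inv x"
    if "\<exists>ws. length ws = n \<and> set ws \<subseteq> S \<and> word_prod G ws = x" for n x
  proof -
    from that obtain ws where "length ws = n" "set ws \<subseteq> S" "word_prod G ws = x"
      by blast
    then show ?thesis
      using S S_inv word_prod_rev_map_inv[of ws]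
      by (intro exI[of _ "rev (map (m_inv G) ws)"]) auto
  qed
  have "(\<exists>ws. length ws = n \<and> set ws \<subseteq> S \<and> word_prod G ws = inv g) \<longleftrightarrow>
        (\<exists>ws. length ws = n \<and> set ws \<subseteq> S \<and> word_prod G ws = g)" for n
    using invert[of n g] invert[of n "inv g"] g by auto
  then show ?thesis
    unfolding word_length_def by simp
qed

lemma (in group) fin_sym_gen_set_nonempty:
  assumes "fin_sym_gen_set G S" and "carrier G \<noteq> {\<one>}"
  shows "S \<noteq> {}"
  using assms generate_empty by (auto simp: fin_sym_gen_set_def)

lemma curvature_eq_0_if_conj_length_eq:
  assumes "finite S" "S \<noteq> {}"
    and "\<forall>a\<in>S. word_length G S (inv\<^bsub>G\<^esub> a \<otimes>\<^bsub>G\<^esub> g \<otimes>\<^bsub>G\<^esub> a) = word_length G S g"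
  shows "curvature G S g = 0"
proof -
  have "Av G S g = (1 / real (card S)) * (real (card S) * real (word_length G S g))"
    unfolding Av_def using assms(3) by simp
  also have "\<dots> = real (word_length G S g)"
    using assms(1,2) by simp
  finally show ?thesis
    unfolding curvature_def by simp
qed

theorem mainTheorem3:
  fixes G :: "('a, 'b) monoid_scheme" and S N :: "'a set"
  assumes "group G"
    and "fin_sym_gen_set G S"
    and "N \<lhd> G"
    and "\<exists>h\<in>carrier G. N = generate G {h}"
    and "infinite N"
  shows "\<forall>g\<in>N - {\<one>\<^bsub>G\<^esub>}. curvature G S g = 0"
proof
  fix g assume g: "g \<in> N - {\<one>\<^bsub>G\<^esub>}"
  interpret group G by fact
  obtain h where h: "h \<in> carrier G" and N: "N = generate G {h}"
    using assms(4) by blast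
  have S: "finite S" "S \<subseteq> carrier G" "\<forall>a\<in>S. inv\<^bsub>G\<^esub> a \<in> S"
    using assms(2) by (auto simp: fin_sym_gen_set_def)
  have N_sub: "N \<subseteq> carrier G"
    using assms(3) by (simp add: normal_imp_subgroup subgroup.subset)
  then have "carrier G \<noteq> {\<one>\<^bsub>G\<^esub>}"
    using assms(5) finite_subset by (metis finite.emptyI finite_insert)
  then have "S \<noteq> {}"
    using fin_sym_gen_set_nonempty[OF assms(2)] by blast
  moreover have "word_length G S (inv\<^bsub>G\<^esub> a \<otimes>\<^bsub>G\<^esub> g \<otimes>\<^bsub>G\<^esub> a) = word_length G S g"
    if a: "a \<in> S" for a
  proof -
    have "g \<in> carrier G"
      using g N_sub by blast
    moreover have "inv\<^bsub>G\<^esub> a \<otimes>\<^bsub>G\<^esub> g \<otimes>\<^bsub>G\<^esub> a = g \<or> inv\<^bsub>G\<^esub> a \<otimes>\<^bsub>G\<^esub> g \<otimes>\<^bsub>G\<^esub> a = inv\<^bsub>G\<^esub> g"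
      using inner_conj_of_infinite_cyclic_normal[OF h _ _ _, of a g] assms(3,5) N g a S(2)
      by blast
    ultimately show ?thesis
      using word_length_inv[OF S(2,3)] by metis
  qed
  ultimately show "curvature G S g = 0"
    by (intro curvature_eq_0_if_conj_length_eq[OF S(1)]) auto
qed

end
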